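(* There exists a (greedy) algorithm which, given any Hierarchical Correlation Clustering instance on $n$ data points, returns an HC tree $T_1$ satisfying \[hcc_G(T_1)\ge \tfrac13(n-2)\sum_{i<j}w^s_{ij}+\tfrac23 n\sum_{i<j}w^d_{ij}.\]
   Context: An HC tree on $V$ ($|V|=n$) is a rooted tree whose leaves are in bijection with $V$; $|T_{ij}|$ is the number of leaves of the subtree rooted at the lowest common ancestor of $i$ and $j$. Each pair $i<j$ has a similarity weight $w^s_{ij}\ge0$ and a dissimilarity weight $w^d_{ij}\ge0$, and $hcc_G(T)=\sum_{i<j}w^s_{ij}(n-|T_{ij}|)+\sum_{i<j}w^d_{ij}|T_{ij}|$. *)

theory Defs
  imports Complex_Main
begin

datatype 'a hctree = Leaf 'a | Node "'a hctree list"

fun leaves :: "'a hctree \<Rightarrow> 'a list" where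
  "leaves (Leaf x) = [x]"
| "leaves (Node ts) = concat (map leaves ts)"

fun subtrees :: "'a hctree \<Rightarrow> 'a hctree set" where
  "subtrees (Leaf x) = {Leaf x}"
| "subtrees (Node ts) = insert (Node ts) (\<Union>t\<in>set ts. subtrees t)"

text \<open>Every internal node has at least one child (so every leaf of the tree is a labelled leaf).\<close>
fun wf_tree :: "'a hctree \<Rightarrow> bool" where
  "wf_tree (Leaf x) = True"
| "wf_tree (Node ts) = (ts \<noteq> [] \<and> (\<forall>t\<in>set ts. wf_tree t))"

definition is_hc_tree :: "'a set \<Rightarrow> 'a hctree \<Rightarrow> bool" where
  "is_hc_tree V T \<longleftrightarrow> wf_tree T \<and> distinct (leaves T) \<and> set (leaves T) = V"

text \<open>|T_ij|: number of leaves of the subtree rooted at the lowest common ancestor of i and j,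
  i.e. the smallest subtree containing both i and j.\<close>
definition lca_size :: "'a hctree \<Rightarrow> 'a \<Rightarrow> 'a \<Rightarrow> nat" where
  "lca_size T i j = Min {length (leaves S) | S. S \<in> subtrees T \<and> i \<in> set (leaves S) \<and> j \<in> set (leaves S)}"

definition pairs :: "nat \<Rightarrow> (nat \<times> nat) set" where
  "pairs n = {(i, j). i < j \<and> j < n}"

definition hcc :: "nat \<Rightarrow> (nat \<Rightarrow> nat \<Rightarrow> real) \<Rightarrow> (nat \<Rightarrow> nat \<Rightarrow> real) \<Rightarrow> nat hctree \<Rightarrow> real" where
  "hcc n ws wd T =
     (\<Sum>(i, j)\<in>pairs n. ws i j * (real n - real (lca_size T i j)))
   + (\<Sum>(i, j)\<in>pairs n. wd i j * real (lca_size T i j))"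

end

(*
  The algorithm builds a caterpillar: it removes one point v, recursively builds a tree T' on the
  remaining n - 1 points and returns Node [Leaf v, T'].  Pairs inside T' keep their lowest common
  ancestor, so each of their similarity terms grows by exactly w^s_ij, while every pair containing v
  has the whole tree as lowest common ancestor and contributes n w^d_iv.  Writing w(v) for the total
  weight of the pairs at v and W for the total weight of all pairs, the bound therefore survives the
  induction step as soon as n w^s(v) - (n + 2) w^d(v) <= 2 (W^s - W^d).  Since the w(v) sum to 2 W,
  the average of the left side is 2 W^s - 2 (n + 2) W^d / n <= 2 (W^s - W^d), so the greedy choice
  of the v minimising it works.  Only the dissimilarity weights need to be nonnegative.
*)
theory Submission
  imports Defs
begin

lemma leaves_subtree: "S \<in> subtrees T \<Longrightarrow> set (leaves S) \<subseteq> set (leaves T)"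
  by (induction T) auto

lemma self_in_subtrees: "T \<in> subtrees T"
  by (cases T) auto

lemma finite_subtrees: "finite (subtrees T)"
  by (induction T) auto

definition lca_sizes :: "'a hctree \<Rightarrow> 'a \<Rightarrow> 'a \<Rightarrow> nat set" where
  "lca_sizes T i j = {length (leaves S) | S. S \<in> subtrees T \<and> i \<in> set (leaves S) \<and> j \<in> set (leaves S)}"

lemma lca_size_eq_Min: "lca_size T i j = Min (lca_sizes T i j)"
  by (simp add: lca_size_def lca_sizes_def)

lemma lca_size_commute: "lca_size T i j = lca_size T j i"
  unfolding lca_size_def by meson

lemma finite_lca_sizes: "finite (lca_sizes T i j)"
proof -
  have "lca_sizes T i j \<subseteq> (\<lambda>S. length (leaves S)) ` subtrees T"
    unfolding lca_sizes_def by blast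
  then show ?thesis
    using finite_subtrees finite_subset by blast
qed

lemma length_leaves_in_lca_sizes:
  "i \<in> set (leaves T) \<Longrightarrow> j \<in> set (leaves T) \<Longrightarrow> length (leaves T) \<in> lca_sizes T i j"
  unfolding lca_sizes_def using self_in_subtrees by blast

lemma lca_sizes_empty: "i \<notin> set (leaves T) \<Longrightarrow> lca_sizes T i j = {}"
  unfolding lca_sizes_def using leaves_subtree by blast

lemma lca_sizes_caterpillar:
  assumes "i \<in> insert v (set (leaves T))" "j \<in> insert v (set (leaves T))" "i \<noteq> j"
  shows "lca_sizes (Node [Leaf v, T]) i j = insert (Suc (length (leaves T))) (lca_sizes T i j)"
proof -
  have "i \<in> set (leaves (Node [Leaf v, T]))" "j \<in> set (leaves (Node [Leaf v, T]))"
    using assms(1,2) by auto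
  then show ?thesis
    using assms(3) by (auto simp: lca_sizes_def intro: exI[of _ "Node [Leaf v, T]"])
qed

lemma lca_size_caterpillar_inner:
  assumes "i \<in> set (leaves T)" "j \<in> set (leaves T)" "i \<noteq> j"
  shows "lca_size (Node [Leaf v, T]) i j = lca_size T i j"
proof -
  have "lca_size T i j \<le> length (leaves T)"
    unfolding lca_size_eq_Min
    using finite_lca_sizes length_leaves_in_lca_sizes[OF assms(1,2)] by (rule Min_le)
  moreover have "lca_sizes T i j \<noteq> {}"
    using length_leaves_in_lca_sizes[OF assms(1,2)] by auto
  ultimately show ?thesis
    using assms unfolding lca_size_eq_Min
    by (subst lca_sizes_caterpillar) (auto simp: Min_insert finite_lca_sizes)
qed

lemma lca_size_caterpillar_root:
  assumes "v \<notin> set (leaves T)" "j \<in> set (leaves T)"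
  shows "lca_size (Node [Leaf v, T]) v j = length (leaves (Node [Leaf v, T]))"
  using assms unfolding lca_size_eq_Min
  by (subst lca_sizes_caterpillar) (auto simp: lca_sizes_empty)

definition pairs_in :: "'a::linorder set \<Rightarrow> ('a \<times> 'a) set" where
  "pairs_in V = {(i, j). i < j \<and> i \<in> V \<and> j \<in> V}"

definition incident_pairs :: "'a::linorder set \<Rightarrow> 'a \<Rightarrow> ('a \<times> 'a) set" where
  "incident_pairs V v = {p \<in> pairs_in V. fst p = v \<or> snd p = v}"

definition weight :: "('a \<Rightarrow> 'a \<Rightarrow> real) \<Rightarrow> ('a \<times> 'a) set \<Rightarrow> real" where
  "weight w P = (\<Sum>(i, j)\<in>P. w i j)"

definition hcc_on :: "'a::linorder set \<Rightarrow> ('a \<Rightarrow> 'a \<Rightarrow> real) \<Rightarrow> ('a \<Rightarrow> 'a \<Rightarrow> real) \<Rightarrow> 'a hctree \<Rightarrow> real" where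
  "hcc_on V ws wd T = (\<Sum>(i, j)\<in>pairs_in V.
     ws i j * (real (card V) - real (lca_size T i j)) + wd i j * real (lca_size T i j))"

lemma finite_pairs_in: "finite V \<Longrightarrow> finite (pairs_in V)"
  by (rule finite_subset[of _ "V \<times> V"]) (auto simp: pairs_in_def)

lemma pairs_in_singleton: "pairs_in {x} = {}"
  by (auto simp: pairs_in_def)

lemma pairs_in_remove: "pairs_in (V - {v}) = pairs_in V - incident_pairs V v"
  by (auto simp: pairs_in_def incident_pairs_def)

lemma weight_nonneg: "(\<And>i j. (i, j) \<in> P \<Longrightarrow> w i j \<ge> 0) \<Longrightarrow> weight w P \<ge> 0"
  unfolding weight_def by (rule sum_nonneg) auto

lemma weight_pairs_in_remove:
  "finite V \<Longrightarrow> weight w (pairs_in (V - {v})) = weight w (pairs_in V) - weight w (incident_pairs V v)"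
  unfolding weight_def pairs_in_remove
  by (rule sum_diff) (auto simp: finite_pairs_in incident_pairs_def)

lemma sum_weight_incident_pairs:
  assumes "finite V"
  shows "(\<Sum>v\<in>V. weight w (incident_pairs V v)) = 2 * weight w (pairs_in V)"
proof -
  have "(\<Sum>v\<in>V. weight w (incident_pairs V v))
      = (\<Sum>v\<in>V. \<Sum>(i, j)\<in>pairs_in V. if i = v \<or> j = v then w i j else 0)"
    unfolding weight_def incident_pairs_def
    using finite_pairs_in[OF assms] by (simp add: sum.inter_filter case_prod_beta)
  also have "\<dots> = (\<Sum>(i, j)\<in>pairs_in V. \<Sum>v\<in>V. if i = v \<or> j = v then w i j else 0)"
    by (simp add: case_prod_beta sum.swap[of _ V])
  also have "\<dots> = (\<Sum>(i, j)\<in>pairs_in V. 2 * w i j)"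
  proof (intro sum.cong refl, clarify)
    fix i j assume "(i, j) \<in> pairs_in V"
    then have "i \<noteq> j" "i \<in> V" "j \<in> V"
      by (auto simp: pairs_in_def)
    then have "(\<Sum>v\<in>V. if i = v \<or> j = v then w i j else 0)
        = (\<Sum>v\<in>V. (if i = v then w i j else 0) + (if j = v then w i j else 0))"
      by (intro sum.cong) auto
    also have "\<dots> = 2 * w i j"
      using assms \<open>i \<in> V\<close> \<open>j \<in> V\<close> by (simp add: sum.distrib)
    finally show "(\<Sum>v\<in>V. if i = v \<or> j = v then w i j else 0) = 2 * w i j" .
  qed
  finally show ?thesis
    by (simp add: weight_def sum_distrib_left case_prod_beta)
qed

lemma length_leaves_hc_tree: "is_hc_tree V T \<Longrightarrow> length (leaves T) = card V"
  unfolding is_hc_tree_def by (metis distinct_card)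

lemma is_hc_tree_caterpillar:
  "is_hc_tree (V - {v}) T \<Longrightarrow> v \<in> V \<Longrightarrow> is_hc_tree V (Node [Leaf v, T])"
  by (auto simp: is_hc_tree_def)

lemma hcc_on_caterpillar:
  assumes T: "is_hc_tree (V - {v}) T" and "v \<in> V" "finite V"
  shows "hcc_on V ws wd (Node [Leaf v, T]) = hcc_on (V - {v}) ws wd T
           + weight ws (pairs_in (V - {v})) + real (card V) * weight wd (incident_pairs V v)"
proof -
  have leaves_T: "set (leaves T) = V - {v}"
    using T by (simp add: is_hc_tree_def)
  have card_V: "real (card V) = real (card (V - {v})) + 1"
    using card_Suc_Diff1[OF assms(3,2)] by (metis of_nat_Suc add.commute)
  have length_leaves: "length (leaves (Node [Leaf v, T])) = card V"
    using is_hc_tree_caterpillar[OF T assms(2)] by (rule length_leaves_hc_tree)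
  define h where "h = (\<lambda>(i, j). ws i j * (real (card V) - real (lca_size (Node [Leaf v, T]) i j))
                               + wd i j * real (lca_size (Node [Leaf v, T]) i j))"
  have "hcc_on V ws wd (Node [Leaf v, T]) = sum h (pairs_in (V - {v})) + sum h (incident_pairs V v)"
    unfolding hcc_on_def h_def pairs_in_remove using finite_pairs_in[OF assms(3)]
    by (subst sum.subset_diff[of "incident_pairs V v"]) (auto simp: incident_pairs_def)
  also have "sum h (pairs_in (V - {v}))
      = (\<Sum>(i, j)\<in>pairs_in (V - {v}). ws i j * (real (card (V - {v})) - real (lca_size T i j))
                                      + wd i j * real (lca_size T i j) + ws i j)"
  proof (intro sum.cong refl, clarify)
    fix i j assume "(i, j) \<in> pairs_in (V - {v})"
    then have "i \<in> set (leaves T)" "j \<in> set (leaves T)" "i \<noteq> j"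
      by (auto simp: pairs_in_def leaves_T)
    then show "h (i, j) = ws i j * (real (card (V - {v})) - real (lca_size T i j))
                          + wd i j * real (lca_size T i j) + ws i j"
      by (simp add: h_def lca_size_caterpillar_inner card_V algebra_simps)
  qed
  also have "\<dots> = hcc_on (V - {v}) ws wd T + weight ws (pairs_in (V - {v}))"
    by (simp add: hcc_on_def weight_def sum.distrib case_prod_beta)
  also have "sum h (incident_pairs V v) = real (card V) * weight wd (incident_pairs V v)"
    unfolding weight_def sum_distrib_left
  proof (intro sum.cong refl, clarify)
    fix i j assume "(i, j) \<in> incident_pairs V v"
    then have "i = v \<and> j \<in> set (leaves T) \<or> j = v \<and> i \<in> set (leaves T)" "v \<notin> set (leaves T)"
      by (auto simp: incident_pairs_def pairs_in_def leaves_T)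
    then have "lca_size (Node [Leaf v, T]) i j = card V"
      using lca_size_caterpillar_root[of v T] lca_size_commute[of _ i j] length_leaves by metis
    then show "h (i, j) = real (card V) * wd i j"
      by (simp add: h_def)
  qed
  finally show ?thesis by simp
qed

definition greedy_cost :: "('a::linorder \<Rightarrow> 'a \<Rightarrow> real) \<Rightarrow> ('a \<Rightarrow> 'a \<Rightarrow> real) \<Rightarrow> 'a set \<Rightarrow> 'a \<Rightarrow> real" where
  "greedy_cost ws wd V v = real (card V) * weight ws (incident_pairs V v)
                           - (real (card V) + 2) * weight wd (incident_pairs V v)"

definition greedy_pick :: "('a::linorder \<Rightarrow> 'a \<Rightarrow> real) \<Rightarrow> ('a \<Rightarrow> 'a \<Rightarrow> real) \<Rightarrow> 'a set \<Rightarrow> 'a" where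
  "greedy_pick ws wd V = arg_min_on (greedy_cost ws wd V) V"

lemma greedy_pick_in: "finite V \<Longrightarrow> V \<noteq> {} \<Longrightarrow> greedy_pick ws wd V \<in> V"
  unfolding greedy_pick_def using arg_min_if_finite(1) .

lemma greedy_cost_greedy_pick:
  assumes "finite V" "V \<noteq> {}" "\<And>i j. (i, j) \<in> pairs_in V \<Longrightarrow> wd i j \<ge> 0"
  shows "greedy_cost ws wd V (greedy_pick ws wd V)
           \<le> 2 * (weight ws (pairs_in V) - weight wd (pairs_in V))"
proof -
  define n where "n = real (card V)"
  have "n > 0"
    using assms(1,2) by (simp add: n_def card_gt_0_iff)
  have "n * greedy_cost ws wd V (greedy_pick ws wd V) \<le> (\<Sum>u\<in>V. greedy_cost ws wd V u)"
    unfolding n_def greedy_pick_def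
    by (rule sum_bounded_below) (rule arg_min_least[OF assms(1,2)])
  also have "\<dots> = n * 2 * weight ws (pairs_in V) - (n + 2) * 2 * weight wd (pairs_in V)"
    by (simp add: greedy_cost_def n_def sum_subtractf sum_distrib_left[symmetric] sum_weight_incident_pairs assms(1))
  also have "\<dots> \<le> n * (2 * (weight ws (pairs_in V) - weight wd (pairs_in V)))"
    using weight_nonneg[of "pairs_in V" wd] assms(3) by (simp add: algebra_simps)
  finally show ?thesis
    using \<open>n > 0\<close> by simp
qed

text \<open>For \<open>V = {}\<close> and infinite \<open>V\<close> (where \<open>card V = 0\<close>) the leaf is junk.\<close>

function greedy_tree :: "('a::linorder \<Rightarrow> 'a \<Rightarrow> real) \<Rightarrow> ('a \<Rightarrow> 'a \<Rightarrow> real) \<Rightarrow> 'a set \<Rightarrow> 'a hctree" where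
  "greedy_tree ws wd V =
     (if card V \<le> 1 then Leaf (the_elem V)
      else let v = greedy_pick ws wd V in Node [Leaf v, greedy_tree ws wd (V - {v})])"
  by auto
termination
proof (relation "measure (\<lambda>(ws, wd, V). card V)")
  fix ws wd :: "'a \<Rightarrow> 'a \<Rightarrow> real" and V :: "'a set" and v
  assume "\<not> card V \<le> 1" "v = greedy_pick ws wd V"
  moreover from this have "finite V" "V \<noteq> {}"
    using card.infinite by fastforce+
  ultimately show "((ws, wd, V - {v}), ws, wd, V) \<in> measure (\<lambda>(ws, wd, V). card V)"
    using greedy_pick_in[of V ws wd] by (simp add: card_Diff1_less)
qed simp

declare greedy_tree.simps [simp del]

lemma greedy_tree_step:
  assumes "card V \<ge> 2"
  shows "greedy_tree ws wd V = Node [Leaf (greedy_pick ws wd V), greedy_tree ws wd (V - {greedy_pick ws wd V})]"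
  using assms by (subst greedy_tree.simps) (simp add: Let_def)

lemma greedy_tree_singleton: "greedy_tree ws wd {x} = Leaf x"
  by (simp add: greedy_tree.simps)

lemma greedy_tree_induct [consumes 2, case_names singleton step]:
  assumes "finite V" "V \<noteq> {}"
    and singleton: "\<And>x. P {x}"
    and step: "\<And>V. finite V \<Longrightarrow> card V \<ge> 2 \<Longrightarrow> greedy_pick ws wd V \<in> V
                 \<Longrightarrow> V - {greedy_pick ws wd V} \<noteq> {} \<Longrightarrow> P (V - {greedy_pick ws wd V}) \<Longrightarrow> P V"
  shows "P V"
  using assms(1,2)
proof (induction "card V" arbitrary: V rule: less_induct)
  case less
  show ?case
  proof (cases "card V \<ge> 2")
    case True
    define v where "v = greedy_pick ws wd V"
    have "v \<in> V"
      using greedy_pick_in less.prems by (simp add: v_def)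
    moreover have "card (V - {v}) = card V - 1"
      using \<open>v \<in> V\<close> less.prems(1) by simp
    ultimately have "card (V - {v}) < card V" "card (V - {v}) \<noteq> 0"
      using True by simp_all
    moreover from this(2) have "V - {v} \<noteq> {}"
      by (metis card.empty)
    ultimately show ?thesis
      using less True \<open>v \<in> V\<close> step by (simp add: v_def)
  next
    case False
    with less.prems have "card V = 1"
      by (simp add: card_gt_0_iff le_antisym Suc_leI)
    then show ?thesis
      by (auto simp: card_1_singleton_iff singleton)
  qed
qed

lemma is_hc_tree_greedy_tree:
  "finite V \<Longrightarrow> V \<noteq> {} \<Longrightarrow> is_hc_tree V (greedy_tree ws wd V)"
proof (induction V rule: greedy_tree_induct[where ws = ws and wd = wd])
  case (singleton x)
  then show ?case
    by (simp add: greedy_tree_singleton is_hc_tree_def)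
next
  case (step V)
  then show ?case
    by (simp add: greedy_tree_step is_hc_tree_caterpillar)
qed

lemma hcc_bound_step:
  fixes n a b c d H :: real
  assumes "H \<ge> (n - 3) / 3 * a + 2 * (n - 1) / 3 * c"
    and "n * b - (n + 2) * d \<le> 2 * ((a + b) - (c + d))"
  shows "H + a + n * d \<ge> (n - 2) / 3 * (a + b) + 2 * n / 3 * (c + d)"
  using assms by (simp add: field_simps)

lemma hcc_on_greedy_tree_ge:
  assumes "finite V" "V \<noteq> {}" "\<And>i j. (i, j) \<in> pairs_in V \<Longrightarrow> wd i j \<ge> 0"
  shows "hcc_on V ws wd (greedy_tree ws wd V)
           \<ge> (real (card V) - 2) / 3 * weight ws (pairs_in V) + 2 * real (card V) / 3 * weight wd (pairs_in V)"
  using assms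
proof (induction V rule: greedy_tree_induct[where ws = ws and wd = wd])
  case (singleton x)
  then show ?case
    by (simp add: greedy_tree_singleton hcc_on_def weight_def pairs_in_singleton)
next
  case (step V)
  define v where "v = greedy_pick ws wd V"
  define n where "n = real (card V)"
  have "v \<in> V" "V - {v} \<noteq> {}"
    using step.hyps(3,4) by (simp_all add: v_def)
  have split_weight: "weight w (pairs_in V) = weight w (pairs_in (V - {v})) + weight w (incident_pairs V v)" for w
    using weight_pairs_in_remove[OF step.hyps(1)] by simp
  have IH: "hcc_on (V - {v}) ws wd (greedy_tree ws wd (V - {v}))
      \<ge> (n - 3) / 3 * weight ws (pairs_in (V - {v})) + 2 * (n - 1) / 3 * weight wd (pairs_in (V - {v}))"
    using step.IH step.prems step.hyps \<open>v \<in> V\<close>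
    by (auto simp: v_def[symmetric] n_def of_nat_diff pairs_in_def)
  have greedy: "n * weight ws (incident_pairs V v) - (n + 2) * weight wd (incident_pairs V v)
      \<le> 2 * ((weight ws (pairs_in (V - {v})) + weight ws (incident_pairs V v))
             - (weight wd (pairs_in (V - {v})) + weight wd (incident_pairs V v)))"
    using greedy_cost_greedy_pick[of V wd ws] step.hyps(1) \<open>v \<in> V\<close> step.prems
    by (auto simp: greedy_cost_def n_def v_def split_weight)
  have "is_hc_tree (V - {v}) (greedy_tree ws wd (V - {v}))"
    using step.hyps(1) \<open>V - {v} \<noteq> {}\<close> by (intro is_hc_tree_greedy_tree) simp_all
  then have "hcc_on V ws wd (greedy_tree ws wd V) = hcc_on (V - {v}) ws wd (greedy_tree ws wd (V - {v}))
      + weight ws (pairs_in (V - {v})) + n * weight wd (incident_pairs V v)"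
    using step.hyps(1,2) \<open>v \<in> V\<close>
    by (simp add: greedy_tree_step v_def[symmetric] hcc_on_caterpillar n_def)
  then show ?case
    unfolding n_def[symmetric] split_weight using hcc_bound_step[OF IH greedy] by simp
qed

lemma pairs_eq_pairs_in: "pairs n = pairs_in {..<n}"
  by (auto simp: pairs_def pairs_in_def)

lemma hcc_eq_hcc_on: "hcc n ws wd T = hcc_on {..<n} ws wd T"
  unfolding hcc_def hcc_on_def pairs_eq_pairs_in by (simp add: sum.distrib case_prod_beta)

theorem proposition1:
  shows "\<exists>alg :: nat \<Rightarrow> (nat \<Rightarrow> nat \<Rightarrow> real) \<Rightarrow> (nat \<Rightarrow> nat \<Rightarrow> real) \<Rightarrow> nat hctree.
     \<forall>n ws wd. n \<ge> 1 \<longrightarrow>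
       (\<forall>(i, j)\<in>pairs n. ws i j \<ge> 0 \<and> wd i j \<ge> 0) \<longrightarrow>
       is_hc_tree {..<n} (alg n ws wd) \<and>
       hcc n ws wd (alg n ws wd) \<ge>
         (1/3) * (real n - 2) * (\<Sum>(i, j)\<in>pairs n. ws i j)
         + (2/3) * real n * (\<Sum>(i, j)\<in>pairs n. wd i j)"
proof (intro exI[of _ "\<lambda>n ws wd. greedy_tree ws wd {..<n}"] allI impI conjI)
  fix n :: nat and ws wd :: "nat \<Rightarrow> nat \<Rightarrow> real"
  assume "n \<ge> 1" and nonneg: "\<forall>(i, j)\<in>pairs n. ws i j \<ge> 0 \<and> wd i j \<ge> 0"
  then have "{..<n} \<noteq> {}"
    by (simp add: lessThan_empty_iff)
  then show "is_hc_tree {..<n} (greedy_tree ws wd {..<n})"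
    by (intro is_hc_tree_greedy_tree) simp_all
  have "wd i j \<ge> 0" if "(i, j) \<in> pairs_in {..<n}" for i j
    using nonneg that by (auto simp: pairs_eq_pairs_in)
  show "hcc n ws wd (greedy_tree ws wd {..<n}) \<ge>
         (1/3) * (real n - 2) * (\<Sum>(i, j)\<in>pairs n. ws i j)
         + (2/3) * real n * (\<Sum>(i, j)\<in>pairs n. wd i j)"
    using hcc_on_greedy_tree_ge[of "{..<n}" wd ws] \<open>{..<n} \<noteq> {}\<close> \<open>\<And>i j. _ \<Longrightarrow> wd i j \<ge> 0\<close>
    by (simp add: hcc_eq_hcc_on pairs_eq_pairs_in weight_def)
qed

end
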